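(* Let $M\ge4$ and let $g_n=e^{j2\pi\phi_n}$, $n=-2M,\dots,2M$, with $\phi_n\sim\mathcal{U}[0,1]$ i.i.d. Let $K_g(\tau)=\frac1M\sum_{n=-2M}^{2M}s_ng_ne^{j2\pi n\tau}$. There exist numerical constants $C_1,C_2,C_3$ such that, with probability at least $1-C_3(M^3\log M)^{-1/2}$, $$|K_g(\tau)|\le C_1\sqrt{\frac{\log M}{M}}\quad\text{and}\quad|K_g'(\tau)|\le C_2\sqrt{M\log M}\qquad\text{for all }\tau\in[0,1).$$
   Context: $j=\sqrt{-1}$. For $|n|\le2M$, $s_n=\frac1M\sum_{i=\max\{n-M,-M\}}^{\min\{n+M,M\}}(1-|i/M|)(1-|n/M-i/M|)$ (coefficients of the squared Fejér kernel; $|s_n|\le1$). $K_g'$ is the derivative in $\tau$. *)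

theory Defs
  imports "HOL-Probability.Probability"
begin

definition fejer_sq_coeff :: "nat \<Rightarrow> int \<Rightarrow> real" where
  "fejer_sq_coeff M n =
     (1 / real M) * (\<Sum>i = max (n - int M) (- int M) .. min (n + int M) (int M).
        (1 - \<bar>real_of_int i / real M\<bar>) *
        (1 - \<bar>real_of_int n / real M - real_of_int i / real M\<bar>))"

definition phase :: "(int \<Rightarrow> real) \<Rightarrow> int \<Rightarrow> complex" where
  "phase \<phi> n = exp (\<i> * complex_of_real (2 * pi * \<phi> n))"

definition K_g :: "nat \<Rightarrow> (int \<Rightarrow> real) \<Rightarrow> real \<Rightarrow> complex" where
  "K_g M \<phi> \<tau> = (1 / complex_of_real (real M)) *
     (\<Sum>n = - 2 * int M .. 2 * int M.
        complex_of_real (fejer_sq_coeff M n) * phase \<phi> n *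
        exp (\<i> * complex_of_real (2 * pi * real_of_int n * \<tau>)))"

definition phase_space :: "nat \<Rightarrow> (int \<Rightarrow> real) measure" where
  "phase_space M = PiM {- 2 * int M .. 2 * int M} (\<lambda>_. uniform_measure lborel {0..1})"

end

theory Submission
  imports Defs
begin

(* For fixed \<tau>, the real and imaginary parts of K_g(\<tau>) and K_g'(\<tau>) are sums of independent,
   bounded, centred random variables a_n cos(2 pi \<phi>_n + b_n), so Hoeffding's inequality bounds them by
   O(sqrt(log M / M)) and O(sqrt(M log M)) outside an event of probability O(M^-4). A union bound over the
   M^2 grid points k / M^2 controls both on the grid with probability 1 - O(M^-2); since K_g and K_g' are
   Lipschitz with constants O(M) and O(M^2), the bounds extend to all \<tau> \<in> [0,1) at the cost of an
   additive O(1/M) resp. O(1). Finally M^-2 \<le> (M^3 log M)^(-1/2). *)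

section \<open>Random phases and Hoeffding's inequality\<close>

abbreviation uniform01 :: "real measure" where
  "uniform01 \<equiv> uniform_measure lborel {0..1}"

lemma prob_space_uniform01: "prob_space uniform01"
  by (intro prob_space_uniform_measure) auto

lemma measurable_uniform01_borel:
  "f \<in> borel_measurable borel \<Longrightarrow> f \<in> borel_measurable uniform01"
  by (subst measurable_cong_sets[OF sets_uniform_measure refl]) simp

lemma integral_uniform01_cos: "(\<integral>x. cos (2 * pi * x + b) \<partial>uniform01) = 0"
proof -
  have "(\<integral>x. cos (2 * pi * x + b) \<partial>uniform01) = (\<integral>x. cos (2 * pi * x + b) * indicator {0..1} x \<partial>lborel)"
  proof -
    have "uniform01 = density lborel (\<lambda>x. ennreal (indicator {0..1::real} x))"
      unfolding uniform_measure_def by (intro density_cong) (auto simp: indicator_def)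
    then show ?thesis
      by (simp add: integral_density mult.commute)
  qed
  also have "\<dots> = sin (2 * pi * 1 + b) / (2 * pi) - sin (2 * pi * 0 + b) / (2 * pi)"
    by (intro integral_FTC_Icc_real) (auto intro!: derivative_eq_intros)
  also have "\<dots> = 0"
    by (simp add: sin_add)
  finally show ?thesis .
qed

lemma indep_vars_PiM_components:
  assumes "I \<noteq> {}" and "\<And>i. i \<in> I \<Longrightarrow> prob_space (M i)"
  shows "prob_space.indep_vars (PiM I M) M (\<lambda>i \<omega>. \<omega> i) I"
proof -
  interpret P: prob_space "PiM I M"
    by (intro prob_space_PiM assms)
  have "distr (PiM I M) (PiM I M) (\<lambda>\<omega>. \<lambda>i\<in>I. \<omega> i) = distr (PiM I M) (PiM I M) (\<lambda>\<omega>. \<omega>)"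
    by (intro distr_cong) (auto simp: space_PiM PiE_def extensional_restrict)
  also have "\<dots> = PiM I (\<lambda>i. distr (PiM I M) (M i) (\<lambda>\<omega>. \<omega> i))"
    using assms(2) by (simp add: distr_PiM_component cong: PiM_cong)
  finally show ?thesis
    using assms(1) by (subst P.indep_vars_iff_distr_eq_PiM') auto
qed

lemma Hoeffding_random_phase_cos_sum:
  fixes a b :: "'i \<Rightarrow> real"
  assumes "finite I" "I \<noteq> {}" "A > 0" "\<And>i. i \<in> I \<Longrightarrow> \<bar>a i\<bar> \<le> A" "\<epsilon> \<ge> 0"
  shows "measure (PiM I (\<lambda>_. uniform01))
           {\<omega> \<in> space (PiM I (\<lambda>_. uniform01)). \<epsilon> \<le> \<bar>\<Sum>i\<in>I. a i * cos (2 * pi * \<omega> i + b i)\<bar>}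
         \<le> 2 * exp (- (\<epsilon>\<^sup>2 / (2 * real (card I) * A\<^sup>2)))"
proof -
  let ?P = "PiM I (\<lambda>_. uniform01)"
  interpret P: prob_space ?P
    by (intro prob_space_PiM prob_space_uniform01)
  define X where "X i \<omega> = a i * cos (2 * pi * \<omega> i + b i)" for i \<omega>
  have indep: "P.indep_vars (\<lambda>_. borel) X I"
    unfolding X_def
    by (rule P.indep_vars_compose2[OF indep_vars_PiM_components[OF assms(2) prob_space_uniform01]])
      measurable
  have "P.expectation (X i) = 0" if "i \<in> I" for i
  proof -
    have "P.expectation (X i) = (\<integral>x. a i * cos (2 * pi * x + b i) \<partial>distr ?P uniform01 (\<lambda>\<omega>. \<omega> i))"
      unfolding X_def using that by (subst integral_distr) auto
    also have "\<dots> = a i * (\<integral>x. cos (2 * pi * x + b i) \<partial>uniform01)"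
      by (simp add: distr_PiM_component[OF prob_space_uniform01 that])
    finally show ?thesis
      by (simp add: integral_uniform01_cos)
  qed
  then have mean: "(\<Sum>i\<in>I. P.expectation (X i)) = 0"
    by simp
  interpret H: Hoeffding_ineq ?P I X "\<lambda>_. -A" "\<lambda>_. A" "\<Sum>i\<in>I. P.expectation (X i)"
  proof unfold_locales
    fix i assume "i \<in> I"
    then have "\<bar>X i \<omega>\<bar> \<le> A * 1" for \<omega>
      unfolding X_def abs_mult using assms(3,4) by (intro mult_mono) auto
    then show "AE \<omega> in ?P. X i \<omega> \<in> {-A..A}"
      by (intro AE_I2) (simp add: abs_le_iff minus_le_iff)
  qed (use assms(1) indep in simp_all)
  have spread: "(\<Sum>i\<in>I. (A - - A)\<^sup>2) = 4 * real (card I) * A\<^sup>2"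
    by (simp add: power2_eq_square)
  have "(\<Sum>i\<in>I. (A - - A)\<^sup>2) > 0"
    unfolding spread using assms(1-3) by (simp add: card_gt_0_iff)
  from H.Hoeffding_ineq_abs_ge[OF assms(5) this]
  show ?thesis
    unfolding mean spread by (simp add: X_def mult.assoc)
qed

section \<open>Random trigonometric polynomials\<close>

definition random_trig_poly :: "(int \<Rightarrow> complex) \<Rightarrow> int set \<Rightarrow> (int \<Rightarrow> real) \<Rightarrow> real \<Rightarrow> complex" where
  "random_trig_poly c I \<phi> t = (\<Sum>n\<in>I. c n * exp (\<i> * of_real (2 * pi * (\<phi> n + real_of_int n * t))))"

lemma Re_mult_exp_i: "Re (c * exp (\<i> * of_real x)) = cmod c * cos (x + Arg c)"
proof -
  have "rcis 1 x = exp (\<i> * of_real x)"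
    by (simp add: rcis_def cis_conv_exp)
  then have "c * exp (\<i> * of_real x) = rcis (cmod c) (Arg c) * rcis 1 x"
    by (simp add: rcis_cmod_Arg)
  then show ?thesis
    by (simp add: rcis_mult add.commute)
qed

lemma Re_random_trig_poly:
  "Re (random_trig_poly c I \<phi> t) =
     (\<Sum>n\<in>I. cmod (c n) * cos (2 * pi * \<phi> n + (2 * pi * real_of_int n * t + Arg (c n))))"
  unfolding random_trig_poly_def Re_sum Re_mult_exp_i by (simp add: algebra_simps)

lemma Im_random_trig_poly:
  "Im (random_trig_poly c I \<phi> t) = Re (random_trig_poly (\<lambda>n. - \<i> * c n) I \<phi> t)"
  unfolding random_trig_poly_def Re_sum Im_sum by simp

lemma borel_measurable_random_phase_sum:
  fixes f :: "'i \<Rightarrow> real \<Rightarrow> 'b::{second_countable_topology, real_normed_vector}"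
  assumes "\<And>n. n \<in> I \<Longrightarrow> f n \<in> borel_measurable borel"
  shows "(\<lambda>\<phi>. \<Sum>n\<in>I. f n (\<phi> n)) \<in> borel_measurable (PiM I (\<lambda>_. uniform01))"
proof (rule borel_measurable_sum)
  fix n assume n: "n \<in> I"
  have "f n \<in> borel_measurable uniform01"
    using assms[OF n] by (rule measurable_uniform01_borel)
  then show "(\<lambda>\<phi>. f n (\<phi> n)) \<in> borel_measurable (PiM I (\<lambda>_. uniform01))"
    by (rule measurable_compose[OF measurable_component_singleton[OF n]])
qed

lemma borel_measurable_random_trig_poly [measurable]:
  "(\<lambda>\<phi>. random_trig_poly c I \<phi> t) \<in> borel_measurable (PiM I (\<lambda>_. uniform01))"
  unfolding random_trig_poly_def
  by (intro borel_measurable_random_phase_sum borel_measurable_continuous_onI) (intro continuous_intros)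

lemma random_trig_poly_tail:
  assumes "finite I" "I \<noteq> {}" "A > 0" "\<And>n. n \<in> I \<Longrightarrow> cmod (c n) \<le> A" "\<epsilon> \<ge> 0"
  shows "measure (PiM I (\<lambda>_. uniform01))
           {\<phi> \<in> space (PiM I (\<lambda>_. uniform01)). 2 * \<epsilon> \<le> cmod (random_trig_poly c I \<phi> t)}
         \<le> 4 * exp (- (\<epsilon>\<^sup>2 / (2 * real (card I) * A\<^sup>2)))"
proof -
  let ?P = "PiM I (\<lambda>_. uniform01)"
  interpret P: prob_space ?P
    by (intro prob_space_PiM prob_space_uniform01)
  let ?bound = "2 * exp (- (\<epsilon>\<^sup>2 / (2 * real (card I) * A\<^sup>2)))"
  have tail_Re: "P.prob {\<phi> \<in> space ?P. \<epsilon> \<le> \<bar>Re (random_trig_poly d I \<phi> t)\<bar>} \<le> ?bound"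
    if "\<And>n. n \<in> I \<Longrightarrow> cmod (d n) \<le> A" for d
    unfolding Re_random_trig_poly
    by (rule Hoeffding_random_phase_cos_sum) (use assms that in auto)
  let ?S = "{\<phi> \<in> space ?P. 2 * \<epsilon> \<le> cmod (random_trig_poly c I \<phi> t)}"
  let ?Re = "{\<phi> \<in> space ?P. \<epsilon> \<le> \<bar>Re (random_trig_poly c I \<phi> t)\<bar>}"
  let ?Im = "{\<phi> \<in> space ?P. \<epsilon> \<le> \<bar>Im (random_trig_poly c I \<phi> t)\<bar>}"
  have "\<epsilon> \<le> \<bar>Re z\<bar> \<or> \<epsilon> \<le> \<bar>Im z\<bar>" if "2 * \<epsilon> \<le> cmod z" for z
    using cmod_le[of z] that by linarith
  then have "?S \<subseteq> ?Re \<union> ?Im"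
    by blast
  then have "P.prob ?S \<le> P.prob (?Re \<union> ?Im)"
    by (rule P.finite_measure_mono) measurable
  also have "\<dots> \<le> P.prob ?Re + P.prob ?Im"
    by (rule measure_Un_le) measurable
  also have "\<dots> \<le> ?bound + ?bound"
    unfolding Im_random_trig_poly using assms(4) by (intro add_mono tail_Re) (auto simp: norm_mult)
  finally show ?thesis
    by simp
qed

lemma random_trig_poly_tail_ln:
  assumes "finite I" "I \<noteq> {}" "A > 0" "\<And>n. n \<in> I \<Longrightarrow> cmod (c n) \<le> A"
    and "real (card I) * A\<^sup>2 \<le> B" "x \<ge> 1"
  shows "measure (PiM I (\<lambda>_. uniform01))
           {\<phi> \<in> space (PiM I (\<lambda>_. uniform01)). 2 * sqrt (8 * B * ln x) \<le> cmod (random_trig_poly c I \<phi> t)}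
         \<le> 4 / x ^ 4"
proof -
  have "real (card I) > 0"
    using assms(1,2) by (simp add: card_gt_0_iff)
  then have denom: "0 < 2 * real (card I) * A\<^sup>2" "2 * real (card I) * A\<^sup>2 \<le> 2 * B"
    using assms(3,5) by simp_all
  have "(sqrt (8 * B * ln x))\<^sup>2 = 8 * B * ln x"
    using denom assms(6) by simp
  then have "4 * ln x = (sqrt (8 * B * ln x))\<^sup>2 / (2 * B)"
    using denom by simp
  also have "\<dots> \<le> (sqrt (8 * B * ln x))\<^sup>2 / (2 * real (card I) * A\<^sup>2)"
    using denom by (intro divide_left_mono) auto
  finally have "4 * ln x \<le> (sqrt (8 * B * ln x))\<^sup>2 / (2 * real (card I) * A\<^sup>2)" .
  then have "exp (- ((sqrt (8 * B * ln x))\<^sup>2 / (2 * real (card I) * A\<^sup>2))) \<le> exp (- (4 * ln x))"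
    by simp
  also have "\<dots> = 1 / x ^ 4"
  proof -
    have "ln (x ^ 4) = 4 * ln x"
      using assms(6) by (simp add: ln_realpow)
    then have "exp (4 * ln x) = x ^ 4"
      using assms(6) by (metis exp_ln zero_less_one less_le_trans zero_less_power)
    then show ?thesis
      by (simp add: exp_minus inverse_eq_divide)
  qed
  finally have exp_le: "exp (- ((sqrt (8 * B * ln x))\<^sup>2 / (2 * real (card I) * A\<^sup>2))) \<le> 1 / x ^ 4" .
  have "measure (PiM I (\<lambda>_. uniform01))
           {\<phi> \<in> space (PiM I (\<lambda>_. uniform01)). 2 * sqrt (8 * B * ln x) \<le> cmod (random_trig_poly c I \<phi> t)}
         \<le> 4 * exp (- ((sqrt (8 * B * ln x))\<^sup>2 / (2 * real (card I) * A\<^sup>2)))"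
    by (rule random_trig_poly_tail) (use assms denom in auto)
  also have "\<dots> \<le> 4 / x ^ 4"
    using exp_le by simp
  finally show ?thesis .
qed

lemma norm_exp_i_diff_le: "cmod (exp (\<i> * of_real x) - exp (\<i> * of_real y)) \<le> \<bar>x - y\<bar>"
proof -
  have "exp (\<i> * of_real x) - exp (\<i> * of_real y) = exp (\<i> * of_real y) * (exp (\<i> * of_real (x - y)) - 1)"
    by (simp add: algebra_simps flip: exp_add)
  then have "cmod (exp (\<i> * of_real x) - exp (\<i> * of_real y)) = cmod (exp (\<i> * of_real (x - y)) - 1)"
    by (simp add: norm_mult)
  also have "\<dots> = 2 * \<bar>sin ((x - y) / 2)\<bar>"
    by (rule dist_exp_i_1)
  also have "\<dots> \<le> \<bar>x - y\<bar>"
    using abs_sin_x_le_abs_x[of "(x - y) / 2"] by simp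
  finally show ?thesis .
qed

lemma lipschitz_random_trig_poly:
  assumes "\<And>n. n \<in> I \<Longrightarrow> cmod (c n) \<le> A" "\<And>n. n \<in> I \<Longrightarrow> \<bar>real_of_int n\<bar> \<le> R"
    and "A \<ge> 0" "R \<ge> 0"
  shows "(real (card I) * A * (2 * pi * R))-lipschitz_on UNIV (random_trig_poly c I \<phi>)"
proof (rule lipschitz_onI)
  fix t u :: real
  let ?e = "\<lambda>n s. exp (\<i> * of_real (2 * pi * (\<phi> n + real_of_int n * s)))"
  have "cmod (c n * (?e n t - ?e n u)) \<le> A * (2 * pi * R) * \<bar>t - u\<bar>" if "n \<in> I" for n
  proof -
    have "cmod (?e n t - ?e n u) \<le> 2 * pi * \<bar>real_of_int n\<bar> * \<bar>t - u\<bar>"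
      using norm_exp_i_diff_le by (rule order_trans) (simp add: abs_mult flip: right_diff_distrib)
    also have "\<dots> \<le> 2 * pi * R * \<bar>t - u\<bar>"
      using assms(2)[OF that] by (intro mult_right_mono) auto
    finally show ?thesis
      unfolding norm_mult using assms(1)[OF that] assms(3) by (simp add: mult_mono mult.assoc)
  qed
  then have "cmod (\<Sum>n\<in>I. c n * (?e n t - ?e n u)) \<le> real (card I) * (A * (2 * pi * R) * \<bar>t - u\<bar>)"
    by (intro norm_sum[THEN order_trans] sum_bounded_above) auto
  moreover have "random_trig_poly c I \<phi> t - random_trig_poly c I \<phi> u = (\<Sum>n\<in>I. c n * (?e n t - ?e n u))"
    unfolding random_trig_poly_def by (simp add: right_diff_distrib sum_subtractf)
  ultimately show "dist (random_trig_poly c I \<phi> t) (random_trig_poly c I \<phi> u) \<le>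
      real (card I) * A * (2 * pi * R) * dist t u"
    by (simp add: dist_norm dist_real_def mult.assoc)
qed (use assms(3,4) in simp)

lemma random_trig_poly_has_vector_derivative:
  "(random_trig_poly c I \<phi> has_vector_derivative
      random_trig_poly (\<lambda>n. 2 * pi * \<i> * of_int n * c n) I \<phi> t) (at t)"
proof -
  let ?a = "\<lambda>n. of_real (2 * pi * \<phi> n) :: complex" and ?b = "\<lambda>n. of_real (2 * pi * real_of_int n) :: complex"
  define F where "F z = (\<Sum>n\<in>I. c n * exp (\<i> * (?a n + ?b n * z)))" for z
  have "((\<lambda>z. c n * exp (\<i> * (?a n + ?b n * z))) has_field_derivative
      c n * (exp (\<i> * (?a n + ?b n * z)) * (\<i> * ?b n))) (at z)" for n z
    by (auto intro!: derivative_eq_intros)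
  then have "(F has_field_derivative (\<Sum>n\<in>I. c n * (exp (\<i> * (?a n + ?b n * of_real t)) * (\<i> * ?b n))))
      (at (of_real t))"
    unfolding F_def by (rule DERIV_sum)
  also have "(\<Sum>n\<in>I. c n * (exp (\<i> * (?a n + ?b n * of_real t)) * (\<i> * ?b n))) =
      random_trig_poly (\<lambda>n. 2 * pi * \<i> * of_int n * c n) I \<phi> t"
    unfolding random_trig_poly_def by (intro sum.cong refl) (simp add: algebra_simps)
  finally have "((\<lambda>x. F (of_real x)) has_vector_derivative
      random_trig_poly (\<lambda>n. 2 * pi * \<i> * of_int n * c n) I \<phi> t) (at t)"
    by (rule has_vector_derivative_real_field)
  also have "(\<lambda>x. F (of_real x)) = random_trig_poly c I \<phi>"
    unfolding F_def random_trig_poly_def by (intro ext sum.cong refl) (simp add: algebra_simps)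
  finally show ?thesis .
qed

section \<open>From a grid to the whole interval\<close>

lemma norm_le_of_grid_bound:
  fixes f :: "real \<Rightarrow> 'a::real_normed_vector"
  assumes "L-lipschitz_on UNIV f" "N > 0" "\<And>k. k < N \<Longrightarrow> norm (f (real k / real N)) \<le> c"
    and "\<tau> \<in> {0..<1}"
  shows "norm (f \<tau>) \<le> c + L / real N"
proof -
  define k where "k = nat \<lfloor>\<tau> * real N\<rfloor>"
  have "0 \<le> \<tau> * real N"
    using assms(4) by simp
  then have "real k = of_int \<lfloor>\<tau> * real N\<rfloor>"
    by (simp add: k_def)
  then have k: "real k \<le> \<tau> * real N" "\<tau> * real N < real k + 1"
    using of_int_floor_le[of "\<tau> * real N"] real_of_int_floor_add_one_gt[of "\<tau> * real N"] by linarith+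
  have "\<tau> * real N < real N"
    using assms(2,4) by simp
  with k(1) have "k < N"
    by simp
  have "\<tau> - real k / real N = (\<tau> * real N - real k) / real N"
    using assms(2) by (simp add: field_simps)
  moreover have "\<bar>\<tau> * real N - real k\<bar> \<le> 1"
    using k by linarith
  ultimately have "\<bar>\<tau> - real k / real N\<bar> \<le> 1 / real N"
    by (simp add: abs_divide divide_right_mono)
  then have "L * \<bar>\<tau> - real k / real N\<bar> \<le> L / real N"
    using lipschitz_on_nonneg[OF assms(1)] by (simp add: mult_left_mono divide_inverse)
  moreover have "norm (f \<tau> - f (real k / real N)) \<le> L * \<bar>\<tau> - real k / real N\<bar>"
    using lipschitz_on_normD[OF assms(1)] by simp
  moreover have "norm (f \<tau>) \<le> norm (f (real k / real N)) + norm (f \<tau> - f (real k / real N))"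
    by (rule norm_triangle_sub)
  ultimately show ?thesis
    using assms(3)[OF \<open>k < N\<close>] by linarith
qed

lemma ex_norm_gt_on_Ico_iff_Rats:
  fixes f :: "real \<Rightarrow> 'a::real_normed_vector"
  assumes "continuous_on UNIV f"
  shows "(\<exists>\<tau>\<in>{0..<1}. a < norm (f \<tau>)) \<longleftrightarrow> (\<exists>q\<in>\<rat> \<inter> {0..<1}. a < norm (f q))"
proof
  assume "\<exists>\<tau>\<in>{0..<1}. a < norm (f \<tau>)"
  then obtain \<tau> where \<tau>: "\<tau> \<in> {0..<1}" "a < norm (f \<tau>)"
    by blast
  have "open {t. a < norm (f t)}"
    by (intro open_Collect_less continuous_intros assms)
  then obtain e where "e > 0" and e: "ball \<tau> e \<subseteq> {t. a < norm (f t)}"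
    using \<tau>(2) by (meson mem_Collect_eq openE)
  obtain q where "q \<in> \<rat>" "\<tau> < q" "q < \<tau> + min e (1 - \<tau>)"
    using Rats_dense_in_real[of \<tau> "\<tau> + min e (1 - \<tau>)"] \<tau>(1) \<open>e > 0\<close> by auto
  moreover from this have "q \<in> ball \<tau> e"
    by (simp add: dist_real_def)
  ultimately show "\<exists>q\<in>\<rat> \<inter> {0..<1}. a < norm (f q)"
    using e \<tau>(1) by (intro bexI[of _ q]) auto
qed auto

lemma sup_norm_gt_event:
  fixes f :: "'a \<Rightarrow> real \<Rightarrow> 'b::real_normed_vector"
  assumes "finite_measure P" "N > 0"
    and lipschitz: "\<And>\<phi>. \<phi> \<in> space P \<Longrightarrow> L-lipschitz_on UNIV (f \<phi>)"
    and meas: "\<And>t. (\<lambda>\<phi>. f \<phi> t) \<in> borel_measurable P"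
    and tail: "\<And>t. measure P {\<phi> \<in> space P. c \<le> norm (f \<phi> t)} \<le> p"
    and "c + L / real N \<le> b"
  shows "{\<phi> \<in> space P. \<exists>\<tau>\<in>{0..<1}. b < norm (f \<phi> \<tau>)} \<in> sets P"
    and "measure P {\<phi> \<in> space P. \<exists>\<tau>\<in>{0..<1}. b < norm (f \<phi> \<tau>)} \<le> real N * p"
proof -
  interpret finite_measure P by fact
  note meas [measurable]
  let ?E = "{\<phi> \<in> space P. \<exists>\<tau>\<in>{0..<1}. b < norm (f \<phi> \<tau>)}"
  let ?B = "\<lambda>k. {\<phi> \<in> space P. c \<le> norm (f \<phi> (real k / real N))}"
  have "?E = {\<phi> \<in> space P. \<exists>q\<in>\<rat> \<inter> {0..<1}. b < norm (f \<phi> q)}"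
    using ex_norm_gt_on_Ico_iff_Rats[OF lipschitz_on_continuous_on[OF lipschitz]] by blast
  also have "\<dots> \<in> sets P"
    by (intro sets.sets_Collect_countable_Ex' countable_Int1 countable_rat) measurable
  finally show "?E \<in> sets P" .
  have "?E \<subseteq> (\<Union>k<N. ?B k)"
  proof
    fix \<phi> assume "\<phi> \<in> ?E"
    then obtain \<tau> where \<phi>: "\<phi> \<in> space P" and "\<tau> \<in> {0..<1}" "b < norm (f \<phi> \<tau>)"
      by blast
    show "\<phi> \<in> (\<Union>k<N. ?B k)"
    proof (rule ccontr)
      assume "\<phi> \<notin> (\<Union>k<N. ?B k)"
      then have "norm (f \<phi> (real k / real N)) \<le> c" if "k < N" for k
        using that \<phi> by (fastforce simp: not_le)
      then have "norm (f \<phi> \<tau>) \<le> c + L / real N"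
        using norm_le_of_grid_bound[OF lipschitz[OF \<phi>] \<open>N > 0\<close>] \<open>\<tau> \<in> {0..<1}\<close> by blast
      with \<open>b < norm (f \<phi> \<tau>)\<close> \<open>c + L / real N \<le> b\<close> show False
        by linarith
    qed
  qed
  then have "measure P ?E \<le> measure P (\<Union>k<N. ?B k)"
    by (intro finite_measure_mono) measurable
  also have "\<dots> \<le> (\<Sum>k<N. measure P (?B k))"
    by (intro finite_measure_subadditive_finite) auto
  also have "\<dots> \<le> real N * p"
    using sum_bounded_above[of "{..<N}" "\<lambda>k. measure P (?B k)" p] tail by simp
  finally show "measure P ?E \<le> real N * p" .
qed

lemma one_le_ln: "(3::real) \<le> x \<Longrightarrow> 1 \<le> ln x"
  using exp_le by (subst ln_ge_iff) auto

lemma one_le_mult_ln: "(3::real) \<le> x \<Longrightarrow> 1 \<le> x * ln x"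
  using mult_mono[of 1 x 1 "ln x"] one_le_ln[of x] by simp

lemma inverse_le_sqrt_ln_div: "(3::real) \<le> x \<Longrightarrow> 1 / x \<le> sqrt (ln x / x)"
  using one_le_mult_ln[of x] by (intro real_le_rsqrt) (simp add: power2_eq_square field_simps)

lemma two_sqrt_mult_add_le:
  fixes a y k d :: real
  assumes "0 \<le> a" "0 \<le> y" "0 \<le> k" "d \<le> sqrt y"
  shows "2 * sqrt (a * y) + k * d \<le> (2 * sqrt a + k) * sqrt y"
  using mult_left_mono[OF assms(4,3)] by (simp add: real_sqrt_mult distrib_right)

lemma inverse_square_le_powr: "(3::real) \<le> x \<Longrightarrow> 1 / x\<^sup>2 \<le> (x ^ 3 * ln x) powr (-1/2)"
proof -
  assume x: "3 \<le> x"
  have pos: "0 < x ^ 3 * ln x"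
    using x one_le_ln[OF x] by simp
  have "x ^ 3 * ln x \<le> (x\<^sup>2)\<^sup>2"
    using x ln_le_minus_one[of x] by (simp add: power2_eq_square power3_eq_cube mult_left_mono)
  then have "sqrt (x ^ 3 * ln x) \<le> sqrt ((x\<^sup>2)\<^sup>2)"
    by (rule real_sqrt_le_mono)
  also have "sqrt ((x\<^sup>2)\<^sup>2) = x\<^sup>2"
    by (simp only: real_sqrt_abs abs_power2)
  finally have "sqrt (x ^ 3 * ln x) \<le> x\<^sup>2" .
  then have "1 / x\<^sup>2 \<le> 1 / sqrt (x ^ 3 * ln x)"
    using pos x by (intro divide_left_mono) (auto intro!: mult_pos_pos)
  also have "\<dots> = (x ^ 3 * ln x) powr (-1/2)"
    using pos by (simp add: powr_minus_divide powr_half_sqrt[symmetric])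
  finally show ?thesis .
qed

section \<open>The kernel \<open>K_g\<close>\<close>

(* The sharp bound is 1, but any constant will do. *)
lemma abs_fejer_sq_coeff_le:
  assumes "M \<ge> 1"
  shows "\<bar>fejer_sq_coeff M n\<bar> \<le> 3"
proof -
  define lo where "lo = max (n - int M) (- int M)"
  define hi where "hi = min (n + int M) (int M)"
  define f where "f i = (1 - \<bar>real_of_int i / real M\<bar>) * (1 - \<bar>real_of_int n / real M - real_of_int i / real M\<bar>)" for i
  have f: "0 \<le> f i \<and> f i \<le> 1" if "i \<in> {lo..hi}" for i
  proof -
    have "\<bar>real_of_int i\<bar> \<le> real M" "\<bar>real_of_int n - real_of_int i\<bar> \<le> real M"
      using that unfolding lo_def hi_def by auto
    then have "\<bar>real_of_int i / real M\<bar> \<le> 1" "\<bar>real_of_int n / real M - real_of_int i / real M\<bar> \<le> 1"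
      using assms by (simp_all add: abs_divide divide_le_eq_1 flip: diff_divide_distrib)
    then show ?thesis
      unfolding f_def by (auto intro!: mult_nonneg_nonneg mult_le_one)
  qed
  have "card {lo..hi} \<le> 2 * M + 1"
    unfolding lo_def hi_def by simp
  then have "sum f {lo..hi} \<le> 3 * real M"
    using sum_bounded_above[of "{lo..hi}" f 1] f assms by force
  moreover have "0 \<le> sum f {lo..hi}"
    using f by (intro sum_nonneg) auto
  moreover have "fejer_sq_coeff M n = sum f {lo..hi} / real M"
    unfolding fejer_sq_coeff_def lo_def hi_def f_def by simp
  ultimately show ?thesis
    using assms by (simp add: divide_le_eq)
qed

definition K_index :: "nat \<Rightarrow> int set" where
  "K_index M = {- 2 * int M .. 2 * int M}"

definition K_coeff :: "nat \<Rightarrow> int \<Rightarrow> complex" where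
  "K_coeff M n = of_real (fejer_sq_coeff M n / real M)"

definition K_deriv_coeff :: "nat \<Rightarrow> int \<Rightarrow> complex" where
  "K_deriv_coeff M n = 2 * pi * \<i> * of_int n * K_coeff M n"

lemma card_K_index: "card (K_index M) = 4 * M + 1"
  unfolding K_index_def by simp

lemma phase_space_eq: "phase_space M = PiM (K_index M) (\<lambda>_. uniform01)"
  unfolding phase_space_def K_index_def ..

lemma K_g_eq_random_trig_poly: "K_g M \<phi> = random_trig_poly (K_coeff M) (K_index M) \<phi>"
proof
  fix t
  have "exp (\<i> * of_real (2 * pi * (\<phi> n + real_of_int n * t))) =
      phase \<phi> n * exp (\<i> * of_real (2 * pi * real_of_int n * t))" for n
    by (simp add: phase_def algebra_simps flip: exp_add)
  then show "K_g M \<phi> t = random_trig_poly (K_coeff M) (K_index M) \<phi> t"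
    unfolding K_g_def random_trig_poly_def K_index_def K_coeff_def
    by (simp add: sum_distrib_left algebra_simps)
qed

lemma vector_derivative_K_g:
  "vector_derivative (K_g M \<phi>) (at t) = random_trig_poly (K_deriv_coeff M) (K_index M) \<phi> t"
  unfolding K_g_eq_random_trig_poly K_deriv_coeff_def
  by (rule vector_derivative_at[OF random_trig_poly_has_vector_derivative])

lemma norm_K_coeff_le: "M \<ge> 1 \<Longrightarrow> cmod (K_coeff M n) \<le> 3 / real M"
  unfolding K_coeff_def norm_of_real abs_divide
  using abs_fejer_sq_coeff_le[of M n] by (simp add: divide_right_mono)

lemma abs_K_index_le: "n \<in> K_index M \<Longrightarrow> \<bar>real_of_int n\<bar> \<le> 2 * real M"
  unfolding K_index_def by auto

lemma norm_K_deriv_coeff_le: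
  assumes "M \<ge> 1" "n \<in> K_index M"
  shows "cmod (K_deriv_coeff M n) \<le> 12 * pi"
proof -
  have "cmod (K_deriv_coeff M n) = 2 * pi * \<bar>real_of_int n\<bar> * cmod (K_coeff M n)"
    unfolding K_deriv_coeff_def by (simp add: norm_mult)
  also have "\<dots> \<le> 2 * pi * (2 * real M) * (3 / real M)"
    using abs_K_index_le[OF assms(2)] norm_K_coeff_le[OF assms(1)] by (intro mult_mono) auto
  also have "\<dots> = 12 * pi"
    using assms(1) by simp
  finally show ?thesis .
qed

lemma lipschitz_K_g:
  assumes "M \<ge> 1"
  shows "(60 * pi * real M)-lipschitz_on UNIV (K_g M \<phi>)"
proof -
  have "(real (card (K_index M)) * (3 / real M) * (2 * pi * (2 * real M)))-lipschitz_on UNIV (K_g M \<phi>)"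
    unfolding K_g_eq_random_trig_poly
    by (intro lipschitz_random_trig_poly norm_K_coeff_le abs_K_index_le assms) auto
  then show ?thesis
    by (rule lipschitz_on_mono) (use assms in \<open>auto simp: card_K_index field_simps\<close>)
qed

lemma lipschitz_K_g_deriv:
  assumes "M \<ge> 1"
  shows "(240 * pi\<^sup>2 * (real M)\<^sup>2)-lipschitz_on UNIV (\<lambda>t. vector_derivative (K_g M \<phi>) (at t))"
proof -
  have "(real (card (K_index M)) * (12 * pi) * (2 * pi * (2 * real M)))-lipschitz_on UNIV
      (\<lambda>t. vector_derivative (K_g M \<phi>) (at t))"
    unfolding vector_derivative_K_g
    by (intro lipschitz_random_trig_poly norm_K_deriv_coeff_le abs_K_index_le assms) auto
  then show ?thesis
    by (rule lipschitz_on_mono) (use assms in \<open>auto simp: card_K_index power2_eq_square field_simps\<close>)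
qed

lemma K_g_tail:
  assumes "M \<ge> 1"
  shows "measure (phase_space M) {\<phi> \<in> space (phase_space M).
           2 * sqrt (360 * (ln (real M) / real M)) \<le> cmod (K_g M \<phi> t)} \<le> 4 / real M ^ 4"
proof -
  have "real (card (K_index M)) * (3 / real M)\<^sup>2 \<le> 45 / real M"
    using assms by (simp add: card_K_index power2_eq_square field_simps)
  from random_trig_poly_tail_ln[OF _ _ _ norm_K_coeff_le[OF assms] this, where x = "real M" and t = t]
  show ?thesis
    using assms unfolding phase_space_eq K_g_eq_random_trig_poly by (simp add: K_index_def)
qed

lemma K_g_deriv_tail:
  assumes "M \<ge> 1"
  shows "measure (phase_space M) {\<phi> \<in> space (phase_space M).
           2 * sqrt (5760 * pi\<^sup>2 * (real M * ln (real M))) \<le> cmod (vector_derivative (K_g M \<phi>) (at t))}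
         \<le> 4 / real M ^ 4"
proof -
  have "real (card (K_index M)) * (12 * pi)\<^sup>2 \<le> 720 * pi\<^sup>2 * real M"
    using assms by (simp add: card_K_index power2_eq_square field_simps)
  from random_trig_poly_tail_ln[OF _ _ _ norm_K_deriv_coeff_le[OF assms] this, where x = "real M" and t = t]
  show ?thesis
    using assms unfolding phase_space_eq vector_derivative_K_g by (simp add: K_index_def mult.assoc)
qed

lemma prob_space_phase_space: "prob_space (phase_space M)"
  unfolding phase_space_eq by (intro prob_space_PiM prob_space_uniform01)

lemma borel_measurable_K_g: "(\<lambda>\<phi>. K_g M \<phi> t) \<in> borel_measurable (phase_space M)"
  unfolding phase_space_eq K_g_eq_random_trig_poly by measurable

lemma borel_measurable_K_g_deriv:
  "(\<lambda>\<phi>. vector_derivative (K_g M \<phi>) (at t)) \<in> borel_measurable (phase_space M)"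
  unfolding phase_space_eq vector_derivative_K_g by measurable

definition K_g_const :: real where
  "K_g_const = 2 * sqrt 360 + 60 * pi"

definition K_g_deriv_const :: real where
  "K_g_deriv_const = 2 * sqrt (5760 * pi\<^sup>2) + 240 * pi\<^sup>2"

lemma K_g_sup_gt_event:
  assumes "M \<ge> 4"
  defines "E \<equiv> {\<phi> \<in> space (phase_space M).
    \<exists>\<tau>\<in>{0..<1}. K_g_const * sqrt (ln (real M) / real M) < cmod (K_g M \<phi> \<tau>)}"
  shows "E \<in> sets (phase_space M) \<and> measure (phase_space M) E \<le> 4 / (real M)\<^sup>2"
proof -
  interpret P: prob_space "phase_space M"
    by (rule prob_space_phase_space)
  have M: "M \<ge> 1" "3 \<le> real M" "0 < M\<^sup>2"
    using assms(1) by auto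
  have "2 * sqrt (360 * (ln (real M) / real M)) + 60 * pi * (1 / real M)
      \<le> K_g_const * sqrt (ln (real M) / real M)"
    unfolding K_g_const_def using M(2) inverse_le_sqrt_ln_div[OF M(2)]
    by (intro two_sqrt_mult_add_le) auto
  then have "2 * sqrt (360 * (ln (real M) / real M)) + 60 * pi * real M / real (M\<^sup>2)
      \<le> K_g_const * sqrt (ln (real M) / real M)"
    by (simp add: power2_eq_square)
  from sup_norm_gt_event[OF P.finite_measure_axioms M(3) lipschitz_K_g[OF M(1)] borel_measurable_K_g
      K_g_tail[OF M(1)] this]
  show ?thesis
    unfolding E_def using M by (simp add: power2_eq_square power4_eq_xxxx)
qed

lemma K_g_deriv_sup_gt_event:
  assumes "M \<ge> 4"
  defines "E \<equiv> {\<phi> \<in> space (phase_space M).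
    \<exists>\<tau>\<in>{0..<1}. K_g_deriv_const * sqrt (real M * ln (real M)) < cmod (vector_derivative (K_g M \<phi>) (at \<tau>))}"
  shows "E \<in> sets (phase_space M) \<and> measure (phase_space M) E \<le> 4 / (real M)\<^sup>2"
proof -
  interpret P: prob_space "phase_space M"
    by (rule prob_space_phase_space)
  have M: "M \<ge> 1" "3 \<le> real M" "0 < M\<^sup>2"
    using assms(1) by auto
  have "2 * sqrt (5760 * pi\<^sup>2 * (real M * ln (real M))) + 240 * pi\<^sup>2 * 1
      \<le> K_g_deriv_const * sqrt (real M * ln (real M))"
    unfolding K_g_deriv_const_def using M(2) one_le_mult_ln[OF M(2)]
    by (intro two_sqrt_mult_add_le) auto
  then have "2 * sqrt (5760 * pi\<^sup>2 * (real M * ln (real M))) + 240 * pi\<^sup>2 * (real M)\<^sup>2 / real (M\<^sup>2)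
      \<le> K_g_deriv_const * sqrt (real M * ln (real M))"
    using M by simp
  from sup_norm_gt_event[OF P.finite_measure_axioms M(3) lipschitz_K_g_deriv[OF M(1)]
      borel_measurable_K_g_deriv K_g_deriv_tail[OF M(1)] this]
  show ?thesis
    unfolding E_def using M by (simp add: power2_eq_square power4_eq_xxxx)
qed

lemma K_g_sup_bounds:
  assumes "M \<ge> 4"
  shows "measure (phase_space M) {\<phi> \<in> space (phase_space M). \<forall>\<tau>\<in>{0..<1}.
      cmod (K_g M \<phi> \<tau>) \<le> K_g_const * sqrt (ln (real M) / real M) \<and>
      cmod (vector_derivative (K_g M \<phi>) (at \<tau>)) \<le> K_g_deriv_const * sqrt (real M * ln (real M))}
    \<ge> 1 - 8 / (real M)\<^sup>2"
proof -
  interpret P: prob_space "phase_space M"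
    by (rule prob_space_phase_space)
  let ?E1 = "{\<phi> \<in> space (phase_space M).
    \<exists>\<tau>\<in>{0..<1}. K_g_const * sqrt (ln (real M) / real M) < cmod (K_g M \<phi> \<tau>)}"
  let ?E2 = "{\<phi> \<in> space (phase_space M).
    \<exists>\<tau>\<in>{0..<1}. K_g_deriv_const * sqrt (real M * ln (real M)) < cmod (vector_derivative (K_g M \<phi>) (at \<tau>))}"
  have E1: "?E1 \<in> P.events" "P.prob ?E1 \<le> 4 / (real M)\<^sup>2"
    using K_g_sup_gt_event[OF assms] by auto
  have E2: "?E2 \<in> P.events" "P.prob ?E2 \<le> 4 / (real M)\<^sup>2"
    using K_g_deriv_sup_gt_event[OF assms] by auto
  have "1 - 8 / (real M)\<^sup>2 \<le> P.prob (space (phase_space M) - (?E1 \<union> ?E2))"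
    using P.prob_compl[OF sets.Un[OF E1(1) E2(1)]] measure_Un_le[OF E1(1) E2(1)] E1(2) E2(2)
    by linarith
  also have "space (phase_space M) - (?E1 \<union> ?E2) = {\<phi> \<in> space (phase_space M). \<forall>\<tau>\<in>{0..<1}.
      cmod (K_g M \<phi> \<tau>) \<le> K_g_const * sqrt (ln (real M) / real M) \<and>
      cmod (vector_derivative (K_g M \<phi>) (at \<tau>)) \<le> K_g_deriv_const * sqrt (real M * ln (real M))}"
    by (auto simp: not_less)
  finally show ?thesis .
qed

theorem lemma9:
  shows "\<exists>C1 C2 C3 :: real. \<forall>M :: nat. M \<ge> 4 \<longrightarrow>
    prob_space (phase_space M) \<and>
    measure (phase_space M)
      {\<phi> \<in> space (phase_space M). \<forall>\<tau> \<in> {0..<1}.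
          cmod (K_g M \<phi> \<tau>) \<le> C1 * sqrt (ln (real M) / real M) \<and>
          cmod (vector_derivative (K_g M \<phi>) (at \<tau>)) \<le> C2 * sqrt (real M * ln (real M))}
      \<ge> 1 - C3 * (real M ^ 3 * ln (real M)) powr (-1/2)"
proof (intro exI allI impI conjI)
  fix M :: nat assume "M \<ge> 4"
  show "prob_space (phase_space M)"
    by (rule prob_space_phase_space)
  have "8 / (real M)\<^sup>2 \<le> 8 * (real M ^ 3 * ln (real M)) powr (-1/2)"
    using inverse_square_le_powr[of "real M"] \<open>M \<ge> 4\<close> by simp
  with K_g_sup_bounds[OF \<open>M \<ge> 4\<close>] show "measure (phase_space M)
      {\<phi> \<in> space (phase_space M). \<forall>\<tau> \<in> {0..<1}.
          cmod (K_g M \<phi> \<tau>) \<le> K_g_const * sqrt (ln (real M) / real M) \<and>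
          cmod (vector_derivative (K_g M \<phi>) (at \<tau>)) \<le> K_g_deriv_const * sqrt (real M * ln (real M))}
      \<ge> 1 - 8 * (real M ^ 3 * ln (real M)) powr (-1/2)"
    by linarith
qed

end
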